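(* Let $\phi=a|0\rangle\otimes|0\rangle+b|1\rangle\otimes|1\rangle\in\mathbb{C}^2\otimes\mathbb{C}^2$ with $a,b>0$, $b^2=1-a^2$, and $$a^2\in\Bigl[\tfrac12-\tfrac{\sqrt5}{6},\ \tfrac12+\tfrac{\sqrt5}{6}\Bigr].$$ Let $\sigma$ be the orthogonal projector onto $\mathbb{C}\phi$, and let $P_{\psi_1}$ be the orthogonal projector onto the span of $\psi_1=|0\rangle|0\rangle+|1\rangle|1\rangle$. Then $$\tilde\sigma=\sigma-\tfrac{ab}{3}\,(4P_{\psi_1}-\mathbf 1)$$ belongs to $\mathcal D$ and minimizes $\rho\mapsto\|\rho-\sigma\|_{\mathrm{HS}}^2$ over $\rho\in\mathcal D$, and $$E_{\mathrm{HS}}(\sigma)=\tfrac43 a^2b^2.$$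
   Context: $\mathcal T$ denotes the set of states (positive operators of trace one) on $\mathbb{C}^2\otimes\mathbb{C}^2$. The set of disentangled states is $\mathcal D=\{\rho\in\mathcal T:\rho=\sum_k p_k\rho^{(1)}_k\otimes\rho^{(2)}_k,\ p_k\ge0,\ \sum_k p_k=1,\ \rho^{(1)}_k,\rho^{(2)}_k \text{ states on }\mathbb{C}^2\}$. The Hilbert–Schmidt norm is $\|A\|_{\mathrm{HS}}^2=\mathrm{tr}(A^*A)$, and the Hilbert–Schmidt entanglement of a state $\sigma$ is $E_{\mathrm{HS}}(\sigma)=\min_{\rho\in\mathcal D}\|\rho-\sigma\|_{\mathrm{HS}}^2$. *)

theory Defs
  imports "HOL-Analysis.Analysis"
begin

text \<open>Qubit space C^2 = complex^2 (basis indices 0,1 :: 2).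
  Two-qubit space C^2 (x) C^2 = complex^(2 \<times> 2): basis vector |i>|j> has index (i,j).\<close>

type_synonym qvec = "complex ^ 2"
type_synonym qmat = "complex ^ 2 ^ 2"
type_synonym qqvec = "complex ^ (2 \<times> 2)"
type_synonym qqmat = "complex ^ (2 \<times> 2) ^ (2 \<times> 2)"

definition ket :: "2 \<Rightarrow> qvec" where
  "ket i = axis i 1"

definition tensor_vec :: "qvec \<Rightarrow> qvec \<Rightarrow> qqvec" where
  "tensor_vec v w = (\<chi> ij. v $ fst ij * w $ snd ij)"

definition tensor_mat :: "qmat \<Rightarrow> qmat \<Rightarrow> qqmat" where
  "tensor_mat A B = (\<chi> ij kl. A $ fst ij $ fst kl * B $ snd ij $ snd kl)"

definition adjoint_mat :: "complex ^ 'n ^ 'n \<Rightarrow> complex ^ 'n ^ 'n" where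
  "adjoint_mat A = (\<chi> i j. cnj (A $ j $ i))"

definition positive_op :: "complex ^ 'n ^ 'n \<Rightarrow> bool" where
  "positive_op A \<longleftrightarrow> (\<forall>v :: complex ^ 'n.
     (\<Sum>i\<in>UNIV. cnj (v $ i) * (A *v v) $ i) \<in> \<real> \<and>
     0 \<le> Re (\<Sum>i\<in>UNIV. cnj (v $ i) * (A *v v) $ i))"

definition is_state :: "complex ^ 'n ^ 'n \<Rightarrow> bool" where
  "is_state A \<longleftrightarrow> positive_op A \<and> trace A = 1"

definition states :: "qqmat set" where
  "states = {\<rho>. is_state \<rho>}"

definition disentangled :: "qqmat set" where
  "disentangled = {\<rho>. \<rho> \<in> states \<and>
     (\<exists>(n::nat) (p :: nat \<Rightarrow> real) (\<rho>1 :: nat \<Rightarrow> qmat) (\<rho>2 :: nat \<Rightarrow> qmat).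
        (\<forall>k<n. 0 \<le> p k \<and> is_state (\<rho>1 k) \<and> is_state (\<rho>2 k)) \<and>
        (\<Sum>k<n. p k) = 1 \<and>
        \<rho> = (\<Sum>k<n. p k *\<^sub>R tensor_mat (\<rho>1 k) (\<rho>2 k)))}"

definition hs_norm_sq :: "complex ^ 'n ^ 'n \<Rightarrow> real" where
  "hs_norm_sq A = Re (trace (adjoint_mat A ** A))"

definition E_HS :: "qqmat \<Rightarrow> real" where
  "E_HS \<sigma> = (INF \<rho>\<in>disentangled. hs_norm_sq (\<rho> - \<sigma>))"

definition proj_onto :: "complex ^ 'n \<Rightarrow> complex ^ 'n ^ 'n" where
  "proj_onto v = (\<chi> i j. v $ i * cnj (v $ j) / (\<Sum>k\<in>UNIV. of_real ((cmod (v $ k))\<^sup>2)))"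

end

(*
  W = 4 P_psi1 - 1 is an entanglement witness: for qubit states A, B one has
  <A (x) B, W> = 2 <psi1, (A (x) B) psi1> - 1 = 2 tr (A B^T) - 1 <= 1, by a 2 x 2 Cauchy-Schwarz
  argument, so by convexity <rho, W> <= 1 on all of D.  The candidate
  sigma~ = sigma - (ab/3) W satisfies <sigma~, W> = 1, hence sigma - sigma~ is an outer normal of
  D at sigma~ and sigma~ is the Hilbert-Schmidt nearest point of D to sigma, at squared distance
  (ab/3)^2 ||W||^2 = 4 a^2 b^2 / 3.  Finally sigma~ is an X-shaped state, which is separable by an
  explicit decomposition into products of qubit states averaged over the phases i^k; the
  decomposition needs (ab/3)^2 <= (a^2 - ab/3) (b^2 - ab/3), i.e. ab >= 1/3, and this is exactly
  the hypothesis on a^2.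
*)

theory Submission
  imports Defs
begin

lemma UNIV_2_eq: "(UNIV :: 2 set) = {0, 1}"
  using exhaust_2 by (metis UNIV_2 insert_commute zero_neq_one)

lemma forall_2_eq: "(\<forall>i :: 2. P i) \<longleftrightarrow> P 0 \<and> P 1"
  by (metis UNIV_2_eq UNIV_I insertE singletonD)

lemma sum_UNIV_2_eq: "sum f (UNIV :: 2 set) = f 0 + f 1"
  by (simp add: UNIV_2_eq)

lemma UNIV_2x2_eq: "(UNIV :: (2 \<times> 2) set) = {(0, 0), (0, 1), (1, 0), (1, 1)}"
  by (auto simp: UNIV_2_eq simp flip: UNIV_Times_UNIV)

lemma sum_UNIV_2x2: "sum f (UNIV :: (2 \<times> 2) set) = f (0, 0) + f (0, 1) + f (1, 0) + f (1, 1)"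
  by (simp add: UNIV_2x2_eq add.assoc)

lemma forall_2x2: "(\<forall>ij :: 2 \<times> 2. P ij) \<longleftrightarrow> P (0, 0) \<and> P (0, 1) \<and> P (1, 0) \<and> P (1, 1)"
  by (metis UNIV_2x2_eq UNIV_I empty_iff insert_iff)

lemma ket_nth [simp]: "ket 0 $ 0 = 1" "ket 0 $ 1 = 0" "ket 1 $ 0 = 0" "ket 1 $ 1 = 1"
  by (simp_all add: ket_def axis_def)

lemma tensor_mat_nth [simp]: "tensor_mat A B $ (i, j) $ (k, l) = A $ i $ k * B $ j $ l"
  by (simp add: tensor_mat_def)

lemma binary_quadratic_form_nonneg:
  fixes P Q Z x y :: real
  assumes "0 \<le> P" "0 \<le> Q" "Z\<^sup>2 \<le> P * Q"
  shows "2 * Z * x * y \<le> P * x\<^sup>2 + Q * y\<^sup>2"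
proof (cases "P = 0")
  case True
  then show ?thesis
    using assms(2,3) by simp
next
  case False
  have "P * (P * x\<^sup>2 + Q * y\<^sup>2 - 2 * Z * x * y) = (P * x - Z * y)\<^sup>2 + (P * Q - Z\<^sup>2) * y\<^sup>2"
    by (simp add: power2_eq_square algebra_simps)
  also have "\<dots> \<ge> 0"
    using assms(3) by simp
  finally show ?thesis
    using False assms(1) by (simp add: zero_le_mult_iff)
qed

lemma hs_norm_sq_eq_norm: "hs_norm_sq A = (norm A)\<^sup>2"
proof -
  have "hs_norm_sq A = (\<Sum>i\<in>UNIV. \<Sum>k\<in>UNIV. inner (A $ k $ i) (A $ k $ i))"
    unfolding hs_norm_sq_def trace_def matrix_matrix_mult_def adjoint_mat_def
    by (simp add: inner_complex_def power2_eq_square)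
  also have "\<dots> = (\<Sum>k\<in>UNIV. \<Sum>i\<in>UNIV. inner (A $ k $ i) (A $ k $ i))"
    by (rule sum.swap)
  also have "\<dots> = (norm A)\<^sup>2"
    by (simp add: power2_norm_eq_inner inner_vec_def)
  finally show ?thesis .
qed

lemma norm_le_if_obtuse:
  fixes x y z :: "'a :: real_inner"
  assumes "inner (y - x) (z - x) \<le> 0"
  shows "(norm (x - z))\<^sup>2 \<le> (norm (y - z))\<^sup>2"
proof -
  have "(norm (y - z))\<^sup>2 = (norm (y - x))\<^sup>2 - 2 * inner (y - x) (z - x) + (norm (x - z))\<^sup>2"
    by (simp add: power2_norm_eq_inner inner_diff inner_commute)
  then show ?thesis
    using assms zero_le_power2[of "norm (y - x)"] by linarith
qed

lemma E_HS_eq_if_nearest: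
  assumes "\<tau> \<in> disentangled" "\<forall>\<rho>\<in>disentangled. hs_norm_sq (\<tau> - \<sigma>) \<le> hs_norm_sq (\<rho> - \<sigma>)"
  shows "E_HS \<sigma> = hs_norm_sq (\<tau> - \<sigma>)"
  unfolding E_HS_def by (rule cInf_eq_minimum) (use assms in auto)

definition qubit_mat :: "real \<Rightarrow> complex \<Rightarrow> qmat" where
  "qubit_mat p z = (\<chi> i j. if i = 0 then (if j = 0 then of_real p else z)
                              else (if j = 0 then cnj z else of_real (1 - p)))"

lemma qubit_mat_nth [simp]:
  "qubit_mat p z $ 0 $ 0 = of_real p" "qubit_mat p z $ 0 $ 1 = z"
  "qubit_mat p z $ 1 $ 0 = cnj z" "qubit_mat p z $ 1 $ 1 = of_real (1 - p)"
  by (simp_all add: qubit_mat_def)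

lemma qubit_quadratic_form:
  "(\<Sum>i\<in>UNIV. cnj (v $ i) * (A *v v) $ i) =
     cnj (v $ 0) * (A $ 0 $ 0 * v $ 0 + A $ 0 $ 1 * v $ 1)
   + cnj (v $ 1) * (A $ 1 $ 0 * v $ 0 + A $ 1 $ 1 * v $ 1)" for A :: qmat
  by (simp add: sum_UNIV_2_eq matrix_vector_mult_def)

lemma qubit_state_eq:
  assumes "is_state A"
  shows "A = qubit_mat (Re (A $ 0 $ 0)) (A $ 0 $ 1)"
proof -
  have pos: "(\<Sum>i\<in>UNIV. cnj (v $ i) * (A *v v) $ i) \<in> \<real>" for v
    using assms unfolding is_state_def positive_op_def by blast
  have tr: "A $ 0 $ 0 + A $ 1 $ 1 = 1"
    using assms unfolding is_state_def trace_def by (simp add: sum_UNIV_2_eq)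
  have d0: "Im (A $ 0 $ 0) = 0"
    using pos[of "ket 0", unfolded qubit_quadratic_form] by (simp add: complex_is_Real_iff)
  have d1: "Im (A $ 1 $ 1) = 0"
    using pos[of "ket 1", unfolded qubit_quadratic_form] by (simp add: complex_is_Real_iff)
  have "Im (A $ 0 $ 1) + Im (A $ 1 $ 0) = 0"
    using pos[of "ket 0 + ket 1", unfolded qubit_quadratic_form] d0 d1 by (simp add: complex_is_Real_iff)
  moreover have "Re (A $ 0 $ 1) = Re (A $ 1 $ 0)"
    using pos[of "ket 0 + \<i> *s ket 1", unfolded qubit_quadratic_form] d0 d1 by (simp add: complex_is_Real_iff)
  ultimately show ?thesis
    using d0 d1 tr unfolding vec_eq_iff forall_2_eq by (simp add: complex_eq_iff)
qed

lemma qubit_mat_quadratic_form: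
  "(\<Sum>i\<in>UNIV. cnj (v $ i) * (qubit_mat p z *v v) $ i) =
     of_real (p * (cmod (v $ 0))\<^sup>2 + (1 - p) * (cmod (v $ 1))\<^sup>2 + 2 * Re (cnj (v $ 0) * z * v $ 1))"
proof -
  let ?w = "cnj (v $ 0) * z * v $ 1"
  have "(\<Sum>i\<in>UNIV. cnj (v $ i) * (qubit_mat p z *v v) $ i) =
      of_real p * (v $ 0 * cnj (v $ 0)) + of_real (1 - p) * (v $ 1 * cnj (v $ 1)) + (?w + cnj ?w)"
    unfolding qubit_quadratic_form qubit_mat_nth by (simp add: algebra_simps)
  then show ?thesis
    unfolding complex_add_cnj by (simp flip: complex_norm_square)
qed

lemma is_state_qubit_mat:
  "is_state (qubit_mat p z) \<longleftrightarrow> 0 \<le> p \<and> p \<le> 1 \<and> (cmod z)\<^sup>2 \<le> p * (1 - p)"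
  (is "_ \<longleftrightarrow> ?params")
proof -
  define f where "f v = p * (cmod (v $ 0))\<^sup>2 + (1 - p) * (cmod (v $ 1))\<^sup>2 + 2 * Re (cnj (v $ 0) * z * v $ 1)"
    for v :: qvec
  have "is_state (qubit_mat p z) \<longleftrightarrow> (\<forall>v. 0 \<le> f v)"
    by (simp add: is_state_def positive_op_def qubit_mat_quadratic_form f_def trace_def
        sum_UNIV_2_eq flip: of_real_add)
  also have "\<dots> \<longleftrightarrow> ?params"
  proof
    assume f: "\<forall>v. 0 \<le> f v"
    have "0 \<le> f (ket 0)" "0 \<le> f (ket 1)"
      using f by blast+
    then have p: "0 \<le> p" "p \<le> 1"
      by (simp_all add: f_def)
    \<comment> \<open>The columns v of the adjugate, for which M v is det M times a basis vector.\<close>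
    have "f (of_real (1 - p) *s ket 0 - cnj z *s ket 1) = (1 - p) * (p * (1 - p) - (cmod z)\<^sup>2)"
      "f ((- z) *s ket 0 + of_real p *s ket 1) = p * (p * (1 - p) - (cmod z)\<^sup>2)"
      by (simp_all add: f_def cmod_power2 del: of_real_diff) (simp_all add: power2_eq_square algebra_simps)
    then have "0 \<le> (1 - p) * (p * (1 - p) - (cmod z)\<^sup>2) + p * (p * (1 - p) - (cmod z)\<^sup>2)"
      using f by (metis add_nonneg_nonneg)
    then show ?params
      using p by (simp add: algebra_simps)
  next
    assume ?params
    show "\<forall>v. 0 \<le> f v"
    proof
      fix v :: qvec
      have "- Re (cnj (v $ 0) * z * v $ 1) \<le> cmod (cnj (v $ 0) * z * v $ 1)"
        using abs_Re_le_cmod[of "cnj (v $ 0) * z * v $ 1"] by linarith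
      also have "\<dots> = cmod z * cmod (v $ 0) * cmod (v $ 1)"
        by (simp add: norm_mult)
      finally have "- Re (cnj (v $ 0) * z * v $ 1) \<le> cmod z * cmod (v $ 0) * cmod (v $ 1)" .
      moreover have "2 * cmod z * cmod (v $ 0) * cmod (v $ 1) \<le> p * (cmod (v $ 0))\<^sup>2 + (1 - p) * (cmod (v $ 1))\<^sup>2"
        using \<open>?params\<close> by (intro binary_quadratic_form_nonneg) auto
      ultimately show "0 \<le> f v"
        by (simp add: f_def)
    qed
  qed
  finally show ?thesis .
qed

definition psi1 :: qqvec where
  "psi1 = tensor_vec (ket 0) (ket 0) + tensor_vec (ket 1) (ket 1)"

lemma psi1_nth: "psi1 $ (i, j) = (if i = j then 1 else 0)"
proof -
  have "\<forall>i j. psi1 $ (i, j) = (if i = j then 1 else 0)"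
    by (simp add: forall_2_eq psi1_def tensor_vec_def)
  then show ?thesis by blast
qed

definition witness :: qqmat where
  "witness = 4 *\<^sub>R proj_onto psi1 - mat 1"

lemma witness_nth:
  "witness $ (i, j) $ (k, l) = (if i = j \<and> k = l then 2 else 0) - (if (i, j) = (k, l) then 1 else 0)"
proof -
  have "(\<Sum>ij\<in>UNIV. complex_of_real ((cmod (psi1 $ ij))\<^sup>2)) = 2"
    by (simp add: sum_UNIV_2x2 psi1_nth)
  then show ?thesis
    by (simp add: witness_def proj_onto_def psi1_nth mat_def scaleR_conv_of_real)
qed

lemma inner_witness:
  "inner \<rho> witness =
     2 * Re (\<rho> $ (0,0) $ (0,0) + \<rho> $ (0,0) $ (1,1) + \<rho> $ (1,1) $ (0,0) + \<rho> $ (1,1) $ (1,1))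
     - Re (trace \<rho>)"
  by (simp add: inner_vec_def sum_UNIV_2x2 witness_nth inner_complex_def trace_def)

lemma norm_witness: "(norm witness)\<^sup>2 = 12"
  by (simp add: power2_norm_eq_inner inner_vec_def sum_UNIV_2x2 witness_nth inner_complex_def)

lemma inner_tensor_witness:
  assumes "is_state A" "is_state B"
  shows "inner (tensor_mat A B) witness \<le> 1"
proof -
  obtain p z where A: "A = qubit_mat p z"
    using qubit_state_eq[OF assms(1)] by blast
  with assms(1) have p: "0 \<le> p" "p \<le> 1" "(cmod z)\<^sup>2 \<le> p * (1 - p)"
    by (simp_all add: is_state_qubit_mat)
  obtain r w where B: "B = qubit_mat r w"
    using qubit_state_eq[OF assms(2)] by blast
  with assms(2) have r: "0 \<le> r" "r \<le> 1" "(cmod w)\<^sup>2 \<le> r * (1 - r)"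
    by (simp_all add: is_state_qubit_mat)
  have "Re (z * w) \<le> cmod z * cmod w"
    using complex_Re_le_cmod[of "z * w"] by (simp add: norm_mult)
  moreover have "(cmod z * cmod w)\<^sup>2 \<le> (p * (1 - p)) * (r * (1 - r))"
    unfolding power_mult_distrib by (rule mult_mono) (use p r in auto)
  then have "2 * (cmod z * cmod w) \<le> p * (1 - r) + r * (1 - p)"
    using binary_quadratic_form_nonneg[of "p * (1 - r)" "r * (1 - p)" "cmod z * cmod w" 1 1] p r
    by (simp add: mult_ac)
  moreover have "inner (tensor_mat A B) witness = 2 * (p * r + (1 - p) * (1 - r) + 2 * Re (z * w)) - 1"
    by (simp add: A B inner_witness trace_def sum_UNIV_2x2 algebra_simps)
  ultimately show ?thesis
    by (simp add: algebra_simps)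
qed

lemma disentangled_inner_witness:
  assumes "\<rho> \<in> disentangled"
  shows "inner \<rho> witness \<le> 1"
proof -
  obtain n :: nat and p :: "nat \<Rightarrow> real" and \<rho>1 \<rho>2 :: "nat \<Rightarrow> qmat" where
    states: "\<forall>k<n. 0 \<le> p k \<and> is_state (\<rho>1 k) \<and> is_state (\<rho>2 k)" and
    weights: "(\<Sum>k<n. p k) = 1" and
    \<rho>: "\<rho> = (\<Sum>k<n. p k *\<^sub>R tensor_mat (\<rho>1 k) (\<rho>2 k))"
    using assms unfolding disentangled_def by blast
  have "inner \<rho> witness = (\<Sum>k<n. p k * inner (tensor_mat (\<rho>1 k) (\<rho>2 k)) witness)"
    by (simp add: \<rho> inner_sum_left)
  also have "\<dots> \<le> (\<Sum>k<n. p k * 1)"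
    using states by (intro sum_mono mult_left_mono inner_tensor_witness) auto
  finally show ?thesis
    using weights by simp
qed

(* Diagonal (p, c, c, s) in the basis |00>, |01>, |10>, |11>, plus the coherence c between |00> and |11>. *)
definition x_state :: "real \<Rightarrow> real \<Rightarrow> real \<Rightarrow> qqmat" where
  "x_state p s c = (\<chi> ij kl. of_real
     (if ij = kl then (if ij = (0, 0) then p else if ij = (1, 1) then s else c)
      else if fst ij = snd ij \<and> fst kl = snd kl then c else 0))"

lemma x_state_nth:
  "x_state p s c $ (i, j) $ (k, l) = of_real
     (if (i, j) = (k, l) then (if (i, j) = (0, 0) then p else if (i, j) = (1, 1) then s else c)
      else if i = j \<and> k = l then c else 0)"
  by (simp add: x_state_def)

lemma inner_x_state_witness: "inner (x_state p s c) witness = p + s + 2 * c"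
  by (simp add: inner_witness x_state_nth trace_def sum_UNIV_2x2)

lemma is_state_x_state:
  assumes "0 \<le> p" "0 \<le> s" "0 \<le> c" "c\<^sup>2 \<le> p * s" "p + s + 2 * c = 1"
  shows "is_state (x_state p s c)"
  unfolding is_state_def positive_op_def
proof (intro conjI allI)
  show "trace (x_state p s c) = 1"
    using assms(5) by (simp add: trace_def sum_UNIV_2x2 x_state_nth flip: of_real_add)
  fix v :: qqvec
  define w where "w = cnj (v $ (0,0)) * v $ (1,1)"
  define f where "f = p * (cmod (v $ (0,0)))\<^sup>2 + c * (cmod (v $ (0,1)))\<^sup>2
    + c * (cmod (v $ (1,0)))\<^sup>2 + s * (cmod (v $ (1,1)))\<^sup>2 + c * (2 * Re w)"
  have "(\<Sum>i\<in>UNIV. cnj (v $ i) * (x_state p s c *v v) $ i) =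
      of_real p * (v $ (0,0) * cnj (v $ (0,0))) + of_real c * (v $ (0,1) * cnj (v $ (0,1)))
    + of_real c * (v $ (1,0) * cnj (v $ (1,0))) + of_real s * (v $ (1,1) * cnj (v $ (1,1)))
    + of_real c * (w + cnj w)"
    by (simp add: w_def matrix_vector_mult_def sum_UNIV_2x2 x_state_nth algebra_simps)
  then have form: "(\<Sum>i\<in>UNIV. cnj (v $ i) * (x_state p s c *v v) $ i) = of_real f"
    unfolding f_def complex_add_cnj complex_norm_square[symmetric] by simp
  then show "(\<Sum>i\<in>UNIV. cnj (v $ i) * (x_state p s c *v v) $ i) \<in> \<real>"
    by simp
  have "- Re w \<le> cmod w"
    using abs_Re_le_cmod[of w] by linarith
  also have "\<dots> = cmod (v $ (0,0)) * cmod (v $ (1,1))"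
    by (simp add: w_def norm_mult)
  finally have "c * (- Re w) \<le> c * (cmod (v $ (0,0)) * cmod (v $ (1,1)))"
    by (rule mult_left_mono) (rule assms(3))
  moreover have "2 * c * cmod (v $ (0,0)) * cmod (v $ (1,1)) \<le> p * (cmod (v $ (0,0)))\<^sup>2 + s * (cmod (v $ (1,1)))\<^sup>2"
    using assms by (intro binary_quadratic_form_nonneg) auto
  moreover have "0 \<le> c * (cmod (v $ (0,1)))\<^sup>2 + c * (cmod (v $ (1,0)))\<^sup>2"
    using assms(3) by simp
  ultimately show "0 \<le> Re (\<Sum>i\<in>UNIV. cnj (v $ i) * (x_state p s c *v v) $ i)"
    unfolding form f_def by simp
qed

lemma sum_lessThan_4: "(\<Sum>k<(4::nat). f k) = f 0 + f 1 + f 2 + (f 3 :: 'a :: comm_monoid_add)"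
  by (simp add: eval_nat_numeral add.assoc)

(* Averaging over the phases i^k kills every entry that carries a nontrivial power of the phase. *)
lemma phase_twirl:
  fixes u r :: real
  assumes "r\<^sup>2 = u * (1 - u)"
  shows "(\<Sum>k<4. tensor_mat (qubit_mat u (of_real r * cnj (\<i> ^ k))) (qubit_mat u (of_real r * \<i> ^ k)))
    = 4 *\<^sub>R x_state (u\<^sup>2) ((1 - u)\<^sup>2) (u * (1 - u))"
proof -
  have "r * r = u - u * u"
    using assms by (simp add: power2_eq_square algebra_simps)
  then show ?thesis
    unfolding vec_eq_iff forall_2x2 sum_lessThan_4
    by (simp add: x_state_nth scaleR_conv_of_real power3_eq_cube algebra_simps flip: of_real_mult)
      (simp add: complex_eq_iff power2_eq_square algebra_simps)
qed

lemma x_state_0_1_0_eq_tensor: "x_state 0 1 0 = tensor_mat (qubit_mat 0 0) (qubit_mat 0 0)"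
  unfolding vec_eq_iff forall_2x2 by (simp add: x_state_nth)

lemma x_state_decomposition:
  fixes t u r :: real
  assumes "r\<^sup>2 = u * (1 - u)" "t * u\<^sup>2 = p" "t * (u * (1 - u)) = c" "t * (1 - u)\<^sup>2 = c\<^sup>2 / p"
  shows "x_state p s c =
    (\<Sum>k<4. (t / 4) *\<^sub>R tensor_mat (qubit_mat u (of_real r * cnj (\<i> ^ k))) (qubit_mat u (of_real r * \<i> ^ k)))
    + (s - c\<^sup>2 / p) *\<^sub>R tensor_mat (qubit_mat 0 0) (qubit_mat 0 0)"
proof -
  have "x_state p s c = t *\<^sub>R x_state (u\<^sup>2) ((1 - u)\<^sup>2) (u * (1 - u)) + (s - c\<^sup>2 / p) *\<^sub>R x_state 0 1 0"
    unfolding vec_eq_iff forall_2x2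
    by (simp add: x_state_nth scaleR_conv_of_real[where 'a = complex] assms(2-4)
        flip: of_real_mult of_real_add of_real_diff of_real_power of_real_divide)
  then show ?thesis
    unfolding scaleR_sum_right[symmetric] phase_twirl[OF assms(1)] x_state_0_1_0_eq_tensor[symmetric] by simp
qed

lemma x_state_twirl_parameters:
  fixes p c :: real
  assumes "0 < p" "0 \<le> c"
  obtains t u r where "0 \<le> u" "u \<le> 1" "r\<^sup>2 = u * (1 - u)"
    "t * u\<^sup>2 = p" "t * (u * (1 - u)) = c" "t * (1 - u)\<^sup>2 = c\<^sup>2 / p"
proof -
  define N where "N = sqrt p + c / sqrt p"
  define u where "u = sqrt p / N"
  define r where "r = sqrt c / N"
  have "0 < N"
    using assms by (simp add: N_def add_pos_nonneg)
  have sqrt_p: "sqrt p * sqrt p = p" "0 < sqrt p"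
    using assms(1) by simp_all
  have "1 - u = (N - sqrt p) / N"
    using \<open>0 < N\<close> by (simp add: u_def field_simps)
  also have "\<dots> = c / (sqrt p * N)"
    by (simp add: N_def)
  finally have u': "1 - u = c / (sqrt p * N)" .
  have uu: "u * (1 - u) = c / N\<^sup>2"
    using \<open>0 < N\<close> sqrt_p unfolding u' by (simp add: u_def field_simps power2_eq_square)
  show thesis
  proof (rule that[of u r "N\<^sup>2"])
    have "0 \<le> 1 - u"
      unfolding u' using \<open>0 < N\<close> sqrt_p assms(2) by simp
    moreover have "0 \<le> u"
      using \<open>0 < N\<close> sqrt_p by (simp add: u_def)
    ultimately show "0 \<le> u" "u \<le> 1"
      by simp_all
    show "r\<^sup>2 = u * (1 - u)"
      using assms(2) by (simp add: uu r_def power_divide)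
    show "N\<^sup>2 * u\<^sup>2 = p" "N\<^sup>2 * (u * (1 - u)) = c" "N\<^sup>2 * (1 - u)\<^sup>2 = c\<^sup>2 / p"
      using \<open>0 < N\<close> sqrt_p unfolding uu u' by (simp_all add: u_def field_simps power2_eq_square)
  qed
qed

lemma x_state_disentangled:
  assumes "0 < p" "0 \<le> s" "0 \<le> c" "c\<^sup>2 \<le> p * s" "p + s + 2 * c = 1"
  shows "x_state p s c \<in> disentangled"
proof -
  obtain t u r where u: "0 \<le> u" "u \<le> 1" and r: "r\<^sup>2 = u * (1 - u)"
    and t: "t * u\<^sup>2 = p" "t * (u * (1 - u)) = c" "t * (1 - u)\<^sup>2 = c\<^sup>2 / p"
    using x_state_twirl_parameters[OF assms(1,3)] by blast
  have decomposition: "x_state p s c =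
    (\<Sum>k<4. (t / 4) *\<^sub>R tensor_mat (qubit_mat u (of_real r * cnj (\<i> ^ k))) (qubit_mat u (of_real r * \<i> ^ k)))
    + (s - c\<^sup>2 / p) *\<^sub>R tensor_mat (qubit_mat 0 0) (qubit_mat 0 0)"
    using r t by (rule x_state_decomposition)
  have "t = t * u\<^sup>2 + 2 * (t * (u * (1 - u))) + t * (1 - u)\<^sup>2"
    by (simp add: power2_eq_square algebra_simps)
  then have t_sum: "t = p + 2 * c + c\<^sup>2 / p"
    unfolding t .
  have states: "is_state (qubit_mat u (of_real r * cnj (\<i> ^ k)))" "is_state (qubit_mat u (of_real r * \<i> ^ k))"
    for k :: nat
    using u r by (simp_all add: is_state_qubit_mat norm_mult norm_power power_mult_distrib)
  have "is_state (qubit_mat 0 0)"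
    by (simp add: is_state_qubit_mat)
  have "c\<^sup>2 / p \<le> s"
    using assms(1,4) by (simp add: divide_le_eq mult.commute)
  define w where "w k = (if k < 4 then t / 4 else s - c\<^sup>2 / p)" for k :: nat
  define \<rho>1 where "\<rho>1 k = (if k < 4 then qubit_mat u (of_real r * cnj (\<i> ^ k)) else qubit_mat 0 0)" for k :: nat
  define \<rho>2 where "\<rho>2 k = (if k < 4 then qubit_mat u (of_real r * \<i> ^ k) else qubit_mat 0 0)" for k :: nat
  have split5: "(\<Sum>k<5. f k) = (\<Sum>k<4. f k) + f 4" for f :: "nat \<Rightarrow> 'a :: comm_monoid_add"
    by (simp add: eval_nat_numeral)
  have "x_state p s c = (\<Sum>k<5. w k *\<^sub>R tensor_mat (\<rho>1 k) (\<rho>2 k))"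
    unfolding decomposition split5 by (simp add: w_def \<rho>1_def \<rho>2_def)
  moreover have "(\<Sum>k<5. w k) = 1"
    unfolding split5 w_def using t_sum assms(5) by (simp add: add_divide_distrib)
  moreover have "\<forall>k<5. 0 \<le> w k \<and> is_state (\<rho>1 k) \<and> is_state (\<rho>2 k)"
    using states \<open>is_state (qubit_mat 0 0)\<close> \<open>c\<^sup>2 / p \<le> s\<close> t_sum assms(1,3)
    by (simp add: w_def \<rho>1_def \<rho>2_def)
  moreover have "is_state (x_state p s c)"
    using assms by (intro is_state_x_state) auto
  ultimately show ?thesis
    unfolding disentangled_def states_def by blast
qed

lemma ab_ge_one_third:
  fixes a b :: real
  assumes "0 < a" "0 < b" "a\<^sup>2 + b\<^sup>2 = 1" "1/2 - sqrt 5 / 6 \<le> a\<^sup>2" "a\<^sup>2 \<le> 1/2 + sqrt 5 / 6"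
  shows "1/3 \<le> a * b"
proof (rule power2_le_imp_le)
  have "b\<^sup>2 = 1 - a\<^sup>2"
    using assms(3) by simp
  have "(a * b)\<^sup>2 = a\<^sup>2 * b\<^sup>2"
    by (simp add: power_mult_distrib)
  also have "\<dots> = 1/4 - (a\<^sup>2 - 1/2)\<^sup>2"
    unfolding \<open>b\<^sup>2 = 1 - a\<^sup>2\<close> by (simp add: power2_eq_square algebra_simps)
  finally have ab: "(a * b)\<^sup>2 = 1/4 - (a\<^sup>2 - 1/2)\<^sup>2" .
  have "\<bar>a\<^sup>2 - 1/2\<bar> \<le> sqrt 5 / 6"
    using assms(4,5) by linarith
  then have "(a\<^sup>2 - 1/2)\<^sup>2 \<le> 5/36"
    using power_mono[of "\<bar>a\<^sup>2 - 1/2\<bar>" "sqrt 5 / 6" 2] by (simp add: power_divide)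
  then show "(1/3)\<^sup>2 \<le> (a * b)\<^sup>2"
    unfolding ab by (simp add: power_divide)
  show "0 \<le> a * b"
    using assms(1,2) by simp
qed

lemma x_state_disentangled_if_ab_ge_one_third:
  fixes a b :: real
  assumes "0 < a" "0 < b" "a\<^sup>2 + b\<^sup>2 = 1" "1/3 \<le> a * b"
  shows "x_state (a\<^sup>2 - a * b / 3) (b\<^sup>2 - a * b / 3) (a * b / 3) \<in> disentangled"
proof (rule x_state_disentangled)
  have "(a\<^sup>2 - a * b / 3) * (b\<^sup>2 - a * b / 3) - (a * b / 3)\<^sup>2 = a * b * (a * b - (a\<^sup>2 + b\<^sup>2) / 3)"
    by (simp add: power2_eq_square algebra_simps)
  also have "\<dots> \<ge> 0"
    using assms by simp
  finally show coherence: "(a * b / 3)\<^sup>2 \<le> (a\<^sup>2 - a * b / 3) * (b\<^sup>2 - a * b / 3)"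
    by simp
  \<comment> \<open>Both diagonal weights are positive: their product is positive and their sum is 1 - 2ab/3 > 0.\<close>
  have "0 < (a * b / 3)\<^sup>2"
    using assms(1,2) by simp
  then have "0 < (a\<^sup>2 - a * b / 3) * (b\<^sup>2 - a * b / 3)"
    using coherence by linarith
  moreover have "2 * (a * b) \<le> a\<^sup>2 + b\<^sup>2"
    using zero_le_power2[of "a - b"] by (simp add: power2_diff)
  ultimately show "0 < a\<^sup>2 - a * b / 3" "0 \<le> b\<^sup>2 - a * b / 3"
    using assms(3) by (auto simp: zero_less_mult_iff)
  show "0 \<le> a * b / 3" "a\<^sup>2 - a * b / 3 + (b\<^sup>2 - a * b / 3) + 2 * (a * b / 3) = 1"
    using assms by simp_all
qed

lemma proj_onto_minus_witness:
  fixes a b :: real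
  assumes "a\<^sup>2 + b\<^sup>2 = 1"
  shows "proj_onto (of_real a *s tensor_vec (ket 0) (ket 0) + of_real b *s tensor_vec (ket 1) (ket 1))
      - (a * b / 3) *\<^sub>R witness = x_state (a\<^sup>2 - a * b / 3) (b\<^sup>2 - a * b / 3) (a * b / 3)"
proof -
  have "(\<Sum>ij\<in>UNIV. complex_of_real ((cmod ((of_real a *s tensor_vec (ket 0) (ket 0)
      + of_real b *s tensor_vec (ket 1) (ket 1)) $ ij))\<^sup>2)) = 1"
    using assms by (simp add: sum_UNIV_2x2 tensor_vec_def flip: of_real_add of_real_power)
  then show ?thesis
    unfolding vec_eq_iff forall_2x2
    by (simp add: proj_onto_def tensor_vec_def witness_nth x_state_nth scaleR_conv_of_real[where 'a = complex]
        power2_eq_square algebra_simps)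
qed

theorem proposition2:
  fixes a b :: real
  assumes "a > 0" and "b > 0" and "b\<^sup>2 = 1 - a\<^sup>2"
    and "1/2 - sqrt 5 / 6 \<le> a\<^sup>2" and "a\<^sup>2 \<le> 1/2 + sqrt 5 / 6"
  defines "\<phi> \<equiv> complex_of_real a *s tensor_vec (ket 0) (ket 0)
                + complex_of_real b *s tensor_vec (ket 1) (ket 1)"
    and "\<psi>1 \<equiv> tensor_vec (ket 0) (ket 0) + tensor_vec (ket 1) (ket 1)"
  defines "\<sigma> \<equiv> proj_onto \<phi>"
    and "P\<psi>1 \<equiv> proj_onto \<psi>1"
  defines "\<sigma>' \<equiv> \<sigma> - (a * b / 3) *\<^sub>R (4 *\<^sub>R P\<psi>1 - mat 1)"
  shows "\<sigma>' \<in> disentangled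
    \<and> (\<forall>\<rho>\<in>disentangled. hs_norm_sq (\<sigma>' - \<sigma>) \<le> hs_norm_sq (\<rho> - \<sigma>))
    \<and> E_HS \<sigma> = 4/3 * a\<^sup>2 * b\<^sup>2"
proof -
  have norm: "a\<^sup>2 + b\<^sup>2 = 1"
    using assms(3) by simp
  have \<sigma>'_witness: "\<sigma>' = \<sigma> - (a * b / 3) *\<^sub>R witness"
    by (simp add: \<sigma>'_def P\<psi>1_def \<psi>1_def witness_def psi1_def)
  have \<sigma>': "\<sigma>' = x_state (a\<^sup>2 - a * b / 3) (b\<^sup>2 - a * b / 3) (a * b / 3)"
    unfolding \<sigma>'_witness \<sigma>_def \<phi>_def by (rule proj_onto_minus_witness[OF norm])
  have separable: "\<sigma>' \<in> disentangled"
    unfolding \<sigma>' using assms(1,2,4,5) norm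
    by (intro x_state_disentangled_if_ab_ge_one_third ab_ge_one_third) auto
  have nearest: "\<forall>\<rho>\<in>disentangled. hs_norm_sq (\<sigma>' - \<sigma>) \<le> hs_norm_sq (\<rho> - \<sigma>)"
  proof
    fix \<rho> assume "\<rho> \<in> disentangled"
    have "inner (\<rho> - \<sigma>') (\<sigma> - \<sigma>') = a * b / 3 * (inner \<rho> witness - inner \<sigma>' witness)"
      by (simp add: \<sigma>'_witness inner_diff_left algebra_simps)
    also have "\<dots> \<le> 0"
      using disentangled_inner_witness[OF \<open>\<rho> \<in> disentangled\<close>] assms(1,2) norm
      by (simp add: \<sigma>' inner_x_state_witness mult_nonneg_nonpos)
    finally show "hs_norm_sq (\<sigma>' - \<sigma>) \<le> hs_norm_sq (\<rho> - \<sigma>)"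
      unfolding hs_norm_sq_eq_norm by (rule norm_le_if_obtuse)
  qed
  have "hs_norm_sq (\<sigma>' - \<sigma>) = (a * b / 3)\<^sup>2 * (norm witness)\<^sup>2"
    by (simp add: hs_norm_sq_eq_norm \<sigma>'_witness power_mult_distrib power_divide)
  also have "\<dots> = 4/3 * a\<^sup>2 * b\<^sup>2"
    by (simp add: norm_witness power_mult_distrib power_divide)
  finally show ?thesis
    using separable nearest E_HS_eq_if_nearest by simp
qed

end
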